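(* Let $\mathbf{K}=\omega$ be a countable set with no structure (so $G=\mathrm{Aut}(\mathbf{K})=S_\infty$), with exhaustion $\mathbf{A}_m=\{0,\dots,m-1\}$, and $H_m$ the set of injections $\mathbf{A}_m\to\omega$. Then for every $m\geq2$, the set $B'_m$ is meager in $2^{H_m}$. In particular, every $T\subseteq H_m$ with $\overline{\chi_T\cdot G}=2^{H_m}$ (these form a dense $G_\delta$ subset of $2^{H_m}$) is not in $B'_m$.
   Context: Identify subsets of $H_n$ with $2^{H_n}$ (product topology), with right $G$-action $(\chi\cdot g)(f)=\chi(g\circ f)$. A set $S\subseteq H_n$ is minimal if $\overline{\chi_S\cdot G}$ is a minimal $G$-flow (every orbit dense). $B_n$ is the Boolean algebra of subsets of $H_n$ generated by the minimal subsets of $H_n$. For $m\leq n$ and $T\subseteq H_m$, $i^n_m(T)=\{s\in H_n: s|_{\mathbf{A}_m}\in T\}$, and $B'_m=\{T\subseteq H_m:\exists n\geq m\ (i^n_m(T)\in B_n)\}$. *)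

theory Defs
  imports "HOL-Analysis.Analysis"
begin

text \<open>H m = injections {0..<m} -> nat, represented as distinct lists of length m
  (the list xs represents i |-> xs!i). Composition g o f is map g xs and
  restriction to A_m is take m.\<close>

definition H :: "nat \<Rightarrow> nat list set" where
  "H m = {xs. length xs = m \<and> distinct xs}"

definition Sinf :: "(nat \<Rightarrow> nat) set" where
  "Sinf = {g. bij g}"

definition cube :: "nat \<Rightarrow> (nat list \<Rightarrow> bool) topology" where
  "cube m = product_topology (\<lambda>_. discrete_topology (UNIV :: bool set)) (H m)"

definition chi :: "nat \<Rightarrow> nat list set \<Rightarrow> (nat list \<Rightarrow> bool)" where
  "chi m S = restrict (\<lambda>xs. xs \<in> S) (H m)"

definition act :: "nat \<Rightarrow> (nat list \<Rightarrow> bool) \<Rightarrow> (nat \<Rightarrow> nat) \<Rightarrow> (nat list \<Rightarrow> bool)" where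
  "act m c g = restrict (\<lambda>xs. c (map g xs)) (H m)"

definition orbit :: "nat \<Rightarrow> (nat list \<Rightarrow> bool) \<Rightarrow> (nat list \<Rightarrow> bool) set" where
  "orbit m c = (\<lambda>g. act m c g) ` Sinf"

text \<open>S is minimal iff the orbit closure of chi_S is a minimal flow: every orbit in it is dense.\<close>
definition minimal_set :: "nat \<Rightarrow> nat list set \<Rightarrow> bool" where
  "minimal_set m S \<longleftrightarrow> S \<subseteq> H m \<and>
     (\<forall>y \<in> cube m closure_of orbit m (chi m S).
        cube m closure_of orbit m y = cube m closure_of orbit m (chi m S))"

inductive_set Balg :: "nat \<Rightarrow> nat list set set" for n where
  gen: "minimal_set n S \<Longrightarrow> S \<in> Balg n"
| empty: "{} \<in> Balg n"
| compl: "S \<in> Balg n \<Longrightarrow> H n - S \<in> Balg n"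
| union: "S \<in> Balg n \<Longrightarrow> T \<in> Balg n \<Longrightarrow> S \<union> T \<in> Balg n"

definition incl :: "nat \<Rightarrow> nat \<Rightarrow> nat list set \<Rightarrow> nat list set" where
  "incl n m T = {s \<in> H n. take m s \<in> T}"

definition Bprime :: "nat \<Rightarrow> nat list set set" where
  "Bprime m = {T. T \<subseteq> H m \<and> (\<exists>n\<ge>m. incl n m T \<in> Balg n)}"

definition nowhere_dense_in :: "'a topology \<Rightarrow> 'a set \<Rightarrow> bool" where
  "nowhere_dense_in X S \<longleftrightarrow> S \<subseteq> topspace X \<and> X interior_of (X closure_of S) = {}"

definition meager_in :: "'a topology \<Rightarrow> 'a set \<Rightarrow> bool" where
  "meager_in X S \<longleftrightarrow> (\<exists>F :: nat \<Rightarrow> 'a set. (\<forall>k. nowhere_dense_in X (F k)) \<and> S \<subseteq> (\<Union>k. F k))"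

end

theory Submission
  imports Defs "HOL-Library.Ramsey"
begin

(* For S \<subseteq> H_n and N, the traces of S on {0,...,N-1} are the sets {s. g \<circ> s \<in> S} of
  injections into {0,...,N-1}, for g \<in> S_\<infinity>. By Ramsey's theorem the orbit closure of a minimal
  set S contains a set defined by order patterns, and minimality forces S to have no more traces
  than that set, i.e. at most N^N. Counting traces is submultiplicative under Boolean operations,
  so a set in B_n has at most N^(kN) traces, and pulling back along i^n_m only shifts N. For m \<ge> 2
  there are 2^(N^2 - N) candidate traces, so every T \<in> B'_m omits some trace A. The points of the
  cube omitting a fixed trace form a nowhere dense set, and there are countably many pairs (N, A);
  a point with dense orbit omits no trace. *)

lemma nowhere_dense_inI:
  assumes "F \<subseteq> topspace X"
    and "\<And>U. openin X U \<Longrightarrow> U \<noteq> {} \<Longrightarrow> \<exists>V. openin X V \<and> V \<noteq> {} \<and> V \<subseteq> U \<and> V \<inter> F = {}"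
  shows "nowhere_dense_in X F"
  unfolding nowhere_dense_in_def interior_of_eq_empty
proof (intro conjI assms(1) allI impI)
  fix T assume T: "openin X T \<and> T \<subseteq> X closure_of F"
  show "T = {}"
  proof (rule ccontr)
    assume "T \<noteq> {}"
    then obtain V where V: "openin X V" "V \<noteq> {}" "V \<subseteq> T" "V \<inter> F = {}"
      using assms(2)[of T] T by auto
    then have "V \<inter> X closure_of F = {}" by (simp add: openin_Int_closure_of_eq_empty)
    then show False using V(2,3) T by blast
  qed
qed

lemma meager_inI_countable_cover:
  fixes F :: "'i::countable \<Rightarrow> 'a set"
  assumes "\<And>i. nowhere_dense_in X (F i)" "S \<subseteq> (\<Union>i. F i)"
  shows "meager_in X S"
  unfolding meager_in_def
proof (intro exI conjI allI)
  show "nowhere_dense_in X (F (from_nat k))" for k by (rule assms(1))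
  show "S \<subseteq> (\<Union>k. F (from_nat k))"
  proof
    fix x assume "x \<in> S"
    then obtain i where "x \<in> F i" using assms(2) by blast
    then show "x \<in> (\<Union>k. F (from_nat k))" by (metis UN_I UNIV_I from_nat_to_nat)
  qed
qed

lemma topspace_cube: "topspace (cube n) = (\<Pi>\<^sub>E s\<in>H n. UNIV)"
  by (simp add: cube_def)

lemma act_in_topspace: "act n c g \<in> topspace (cube n)"
  by (simp add: topspace_cube act_def)

lemma chi_in_topspace: "chi n S \<in> topspace (cube n)"
  by (simp add: topspace_cube chi_def)

lemma orbit_subset_topspace: "orbit n c \<subseteq> topspace (cube n)"
  using act_in_topspace by (auto simp: orbit_def)

lemma cube_points_eq_outside_H:
  "x \<in> topspace (cube n) \<Longrightarrow> y \<in> topspace (cube n) \<Longrightarrow> s \<notin> H n \<Longrightarrow> x s = y s"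
  by (simp add: topspace_cube PiE_def extensional_def)

definition cylinder :: "nat \<Rightarrow> (nat list \<Rightarrow> bool) \<Rightarrow> nat list set \<Rightarrow> (nat list \<Rightarrow> bool) set" where
  "cylinder n x D = {z \<in> topspace (cube n). \<forall>s\<in>D. z s = x s}"

lemma openin_cylinder:
  assumes "finite D" "x \<in> topspace (cube n)"
  shows "openin (cube n) (cylinder n x D)"
  unfolding cube_def openin_product_topology_alt
proof (intro ballI)
  fix z assume z: "z \<in> cylinder n x D"
  define U where "U i = (if i \<in> D then {x i} else (UNIV::bool set))" for i
  have "finite {i \<in> H n. U i \<noteq> topspace (discrete_topology UNIV)}"
    by (rule finite_subset[OF _ assms(1)]) (auto simp: U_def)
  moreover have "z \<in> Pi\<^sub>E (H n) U"
    using z by (auto simp: cylinder_def topspace_cube U_def PiE_iff)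
  moreover have "Pi\<^sub>E (H n) U \<subseteq> cylinder n x D"
  proof
    fix w assume w: "w \<in> Pi\<^sub>E (H n) U"
    then have w_top: "w \<in> topspace (cube n)" by (auto simp: topspace_cube PiE_iff)
    have "w s = x s" if "s \<in> D" for s
      using that w cube_points_eq_outside_H[OF w_top assms(2)] by (cases "s \<in> H n") (auto simp: U_def PiE_iff)
    then show "w \<in> cylinder n x D" using w_top by (simp add: cylinder_def)
  qed
  moreover have "\<forall>i\<in>H n. openin (discrete_topology UNIV) (U i)" by simp
  ultimately show "\<exists>U. finite {i \<in> H n. U i \<noteq> topspace (discrete_topology UNIV)} \<and>
      (\<forall>i\<in>H n. openin (discrete_topology UNIV) (U i)) \<and> z \<in> Pi\<^sub>E (H n) U \<and>
      Pi\<^sub>E (H n) U \<subseteq> cylinder n x D"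
    by blast
qed

lemma openin_cube_contains_cylinder:
  assumes "openin (cube n) U" "z \<in> U"
  obtains D where "finite D" "cylinder n z D \<subseteq> U"
proof -
  obtain V where V: "finite {i \<in> H n. V i \<noteq> topspace (discrete_topology (UNIV::bool set))}"
     "z \<in> Pi\<^sub>E (H n) V" "Pi\<^sub>E (H n) V \<subseteq> U"
    using assms(1)[unfolded cube_def openin_product_topology_alt, THEN bspec, OF assms(2)] by blast
  define D where "D = {i \<in> H n. V i \<noteq> topspace (discrete_topology (UNIV::bool set))}"
  have "cylinder n z D \<subseteq> Pi\<^sub>E (H n) V"
  proof
    fix w assume w: "w \<in> cylinder n z D"
    have "w i \<in> V i" if "i \<in> H n" for i
      using that w V(2) by (cases "i \<in> D") (auto simp: cylinder_def PiE_iff D_def)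
    then show "w \<in> Pi\<^sub>E (H n) V" using w by (auto simp: cylinder_def topspace_cube PiE_iff)
  qed
  then show thesis using that V(1,3) D_def by blast
qed

lemma in_closure_of_cube_iff:
  assumes "x \<in> topspace (cube n)" "A \<subseteq> topspace (cube n)"
  shows "x \<in> cube n closure_of A \<longleftrightarrow> (\<forall>D. finite D \<longrightarrow> (\<exists>a\<in>A. \<forall>s\<in>D. a s = x s))"
proof
  assume x: "x \<in> cube n closure_of A"
  show "\<forall>D. finite D \<longrightarrow> (\<exists>a\<in>A. \<forall>s\<in>D. a s = x s)"
  proof (intro allI impI)
    fix D :: "nat list set" assume "finite D"
    moreover have "x \<in> cylinder n x D" using assms(1) by (simp add: cylinder_def)
    moreover have "openin (cube n) (cylinder n x D)" using \<open>finite D\<close> assms(1) by (rule openin_cylinder)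
    ultimately obtain a where "a \<in> A" "a \<in> cylinder n x D"
      using x unfolding in_closure_of by blast
    then show "\<exists>a\<in>A. \<forall>s\<in>D. a s = x s" by (auto simp: cylinder_def)
  qed
next
  assume R: "\<forall>D. finite D \<longrightarrow> (\<exists>a\<in>A. \<forall>s\<in>D. a s = x s)"
  show "x \<in> cube n closure_of A"
    unfolding in_closure_of
  proof (intro conjI allI impI assms(1))
    fix T assume "x \<in> T \<and> openin (cube n) T"
    then obtain D where D: "finite D" "cylinder n x D \<subseteq> T"
      using openin_cube_contains_cylinder by blast
    then obtain a where "a \<in> A" "\<forall>s\<in>D. a s = x s" using R by blast
    then show "\<exists>y. y \<in> A \<and> y \<in> T" using D assms(2) by (auto simp: cylinder_def)
  qed
qed

section \<open>Order patterns and Ramsey's theorem\<close>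

lemma card_less_less_iff:
  fixes f :: "'a \<Rightarrow> 'b::linorder"
  assumes "finite X" "x \<in> X"
  shows "card {z\<in>X. f z < f x} < card {z\<in>X. f z < f y} \<longleftrightarrow> f x < f y"
proof
  assume "f x < f y"
  then have "{z\<in>X. f z < f x} \<subset> {z\<in>X. f z < f y}" using assms(2) by auto
  then show "card {z\<in>X. f z < f x} < card {z\<in>X. f z < f y}"
    using assms(1) by (simp add: psubset_card_mono)
next
  assume less: "card {z\<in>X. f z < f x} < card {z\<in>X. f z < f y}"
  show "f x < f y"
  proof (rule ccontr)
    assume "\<not> f x < f y"
    then have "{z\<in>X. f z < f y} \<subseteq> {z\<in>X. f z < f x}" by auto
    then have "card {z\<in>X. f z < f y} \<le> card {z\<in>X. f z < f x}"
      using assms(1) by (simp add: card_mono)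
    then show False using less by simp
  qed
qed

definition order_pattern :: "nat list \<Rightarrow> (nat \<times> nat) set" where
  "order_pattern s = {(i, j). i < length s \<and> j < length s \<and> s!i < s!j}"

lemma order_pattern_subset: "order_pattern s \<subseteq> {..<length s} \<times> {..<length s}"
  by (auto simp: order_pattern_def)

lemma order_pattern_map_strict_mono:
  "strict_mono h \<Longrightarrow> order_pattern (map h s) = order_pattern s"
  by (auto simp: order_pattern_def strict_mono_less)

lemma card_less_nth_eq_order_pattern:
  assumes "distinct s" "i < length s"
  shows "card {z \<in> set s. z < s!i} = card {j. (j, i) \<in> order_pattern s}"
proof -
  have "{z \<in> set s. z < s!i} = (!) s ` {j. (j, i) \<in> order_pattern s}"
    using assms(2) by (auto simp: order_pattern_def in_set_conv_nth)
  moreover have "inj_on ((!) s) {j. (j, i) \<in> order_pattern s}"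
    by (rule inj_on_nth[OF assms(1)]) (auto simp: order_pattern_def)
  ultimately show ?thesis by (simp add: card_image)
qed

lemma order_pattern_eq_imp_eq:
  assumes "distinct a" "distinct b" "set a = set b" "order_pattern a = order_pattern b"
  shows "a = b"
proof -
  have len: "length a = length b" using assms(1-3) by (metis distinct_card)
  show ?thesis
  proof (rule nth_equalityI[OF len])
    fix i assume i: "i < length a"
    have "card {z \<in> set a. z < a!i} = card {j. (j, i) \<in> order_pattern a}"
      by (rule card_less_nth_eq_order_pattern[OF assms(1) i])
    also have "\<dots> = card {z \<in> set b. z < b!i}"
      using card_less_nth_eq_order_pattern[OF assms(2), of i] i len assms(4) by simp
    finally have "card {z \<in> set a. z < a!i} = card {z \<in> set a. z < b!i}"
      using assms(3) by simp
    moreover have "a!i \<in> set a" using i by (rule nth_mem)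
    moreover have "b!i \<in> set a" using nth_mem[of i b] i len assms(3) by simp
    ultimately have "\<not> a!i < b!i" "\<not> b!i < a!i"
      using card_less_less_iff[of "set a" "a!i" id "b!i"] card_less_less_iff[of "set a" "b!i" id "a!i"]
      by simp_all
    then show "a!i = b!i" by simp
  qed
qed

definition rank_below :: "(nat \<Rightarrow> nat) \<Rightarrow> nat \<Rightarrow> nat \<Rightarrow> nat" where
  "rank_below g N a = card {b \<in> {..<N}. g b < g a}"

lemma order_pattern_map_rank_below:
  fixes s :: "nat list"
  assumes "set s \<subseteq> {..<N}"
  shows "order_pattern (map g s) = order_pattern (map (rank_below g N) s)"
proof -
  have "rank_below g N (s!i) < rank_below g N (s!j) \<longleftrightarrow> g (s!i) < g (s!j)"
    if "i < length s" for i j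
    unfolding rank_below_def
  proof (rule card_less_less_iff)
    show "s!i \<in> {..<N}" using assms nth_mem[OF that] by blast
  qed simp
  then have pair: "(i, j) \<in> order_pattern (map g s) \<longleftrightarrow>
      (i, j) \<in> order_pattern (map (rank_below g N) s)" for i j
    by (cases "i < length s \<and> j < length s") (auto simp: order_pattern_def)
  show ?thesis
  proof (rule set_eqI)
    fix p :: "nat \<times> nat"
    show "p \<in> order_pattern (map g s) \<longleftrightarrow>
        p \<in> order_pattern (map (rank_below g N) s)"
      by (cases p) (simp only: pair)
  qed
qed

lemma rank_below_less:
  fixes g :: "nat \<Rightarrow> nat"
  assumes "a < N"
  shows "rank_below g N a < N"
proof -
  have "{b \<in> {..<N}. g b < g a} \<subset> {..<N}" using assms by auto
  then have "card {b \<in> {..<N}. g b < g a} < card {..<N}" by (rule psubset_card_mono[rotated]) simp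
  then show ?thesis by (simp add: rank_below_def)
qed

text \<open>Colour each \<open>n\<close>-set by the order patterns of those of its enumerations that lie in \<open>S\<close>.\<close>
lemma ramsey_order_pattern:
  "\<exists>h t. strict_mono (h :: nat \<Rightarrow> nat) \<and> (\<forall>s\<in>H n. map h s \<in> S \<longleftrightarrow> order_pattern s \<in> t)"
proof -
  define K where "K = Pow (Pow ({..<n} \<times> {..<n}))"
  define col where "col X = {order_pattern s | s. s \<in> S \<and> s \<in> H n \<and> set s = X}" for X
  have col_K: "col X \<in> K" for X
    using order_pattern_subset by (fastforce simp: K_def col_def H_def)
  obtain e where e: "bij_betw e K {0..<card K}"
    using ex_bij_betw_finite_nat[of K] by (auto simp: K_def)
  have "(e \<circ> col) ` nsets UNIV n \<subseteq> {..<card K}"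
    using bij_betwE[OF e] col_K by auto
  then obtain Y t0 where Y: "infinite Y" "(e \<circ> col) ` nsets Y n \<subseteq> {t0}"
    using Ramsey_nsets[OF infinite_UNIV_nat] by (metis subset_UNIV)
  define h where "h = enumerate Y"
  have h: "strict_mono h" using Y(1) by (simp add: h_def strict_mono_def enumerate_mono)
  then have inj_h: "inj h" by (rule strict_mono_imp_inj_on)
  define t where "t = inv_into K e t0"
  have col_t: "col X = t" if "X \<in> nsets Y n" for X
    using Y(2) that col_K e by (auto simp: t_def bij_betw_def)
  have "map h s \<in> S \<longleftrightarrow> order_pattern s \<in> t" if s: "s \<in> H n" for s
  proof -
    have dist: "distinct (map h s)" using s inj_h by (simp add: H_def distinct_map inj_on_def)
    have "h ` set s \<in> nsets Y n"
      using s inj_h enumerate_in_set[OF Y(1)]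
      by (auto simp: nsets_def H_def h_def card_image distinct_card inj_on_def)
    then have t: "t = col (set (map h s))" by (simp add: col_t)
    have "order_pattern s \<in> col (set (map h s)) \<longleftrightarrow> map h s \<in> S"
    proof
      assume "order_pattern s \<in> col (set (map h s))"
      then obtain s' where "s' \<in> S" "s' \<in> H n" "set s' = set (map h s)"
          "order_pattern s' = order_pattern (map h s)"
        unfolding col_def order_pattern_map_strict_mono[OF h] by blast
      moreover from this have "s' = map h s"
        using dist by (intro order_pattern_eq_imp_eq) (simp_all add: H_def)
      ultimately show "map h s \<in> S" by simp
    next
      assume "map h s \<in> S"
      moreover have "map h s \<in> H n" using s dist by (simp add: H_def)
      moreover have "order_pattern s = order_pattern (map h s)"
        by (simp add: order_pattern_map_strict_mono[OF h])
      ultimately show "order_pattern s \<in> col (set (map h s))" unfolding col_def by blast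
    qed
    then show ?thesis by (simp add: t)
  qed
  then show ?thesis using h by blast
qed

lemma extend_inj_on_to_bij:
  fixes h :: "'a \<Rightarrow> 'a"
  assumes "inj_on h V" "finite V"
  obtains g where "bij g" "\<And>x. x \<in> V \<Longrightarrow> g x = h x"
proof -
  define W where "W = V \<union> h ` V"
  have "finite W" using assms(2) by (simp add: W_def)
  moreover have "card (h ` V) = card V" using assms(1) by (rule card_image)
  ultimately have "card (W - V) = card (W - h ` V)"
    by (simp add: W_def card_Diff_subset assms(2))
  then obtain \<phi> where \<phi>: "bij_betw \<phi> (W - V) (W - h ` V)"
    using \<open>finite W\<close> by (metis finite_Diff finite_same_card_bij)
  define g where "g x = (if x \<in> V then h x else if x \<in> W then \<phi> x else x)" for x
  have "bij_betw g V (h ` V)"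
    using bij_betw_cong[of V g h] assms(1) by (simp add: g_def inj_on_imp_bij_betw)
  moreover have "bij_betw g (W - V) (W - h ` V)"
    using bij_betw_cong[of "W - V" g \<phi>] \<phi> by (simp add: g_def)
  ultimately have "bij_betw g (V \<union> (W - V)) (h ` V \<union> (W - h ` V))"
    by (rule bij_betw_combine) blast
  moreover have "bij_betw g (- W) (- W)"
    using bij_betw_cong[of "- W" g id] by (simp add: g_def W_def)
  ultimately have "bij_betw g ((V \<union> (W - V)) \<union> - W) ((h ` V \<union> (W - h ` V)) \<union> - W)"
    by (rule bij_betw_combine) (auto simp: W_def)
  moreover have "(V \<union> (W - V)) \<union> - W = UNIV" "(h ` V \<union> (W - h ` V)) \<union> - W = UNIV"
    by (auto simp: W_def)
  ultimately have "bij g" by simp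
  then show thesis by (rule that) (simp add: g_def)
qed

section \<open>Traces\<close>

definition lists_below :: "nat \<Rightarrow> nat \<Rightarrow> nat list set" where
  "lists_below n N = {s \<in> H n. set s \<subseteq> {..<N}}"

definition trace :: "nat \<Rightarrow> nat list set \<Rightarrow> (nat \<Rightarrow> nat) \<Rightarrow> nat \<Rightarrow> nat list set" where
  "trace n S g N = {s \<in> lists_below n N. map g s \<in> S}"

definition traces :: "nat \<Rightarrow> nat list set \<Rightarrow> nat \<Rightarrow> nat list set set" where
  "traces n S N = (\<lambda>g. trace n S g N) ` Sinf"

lemma finite_lists_below: "finite (lists_below n N)"
proof (rule finite_subset)
  show "lists_below n N \<subseteq> {xs. set xs \<subseteq> {..<N} \<and> length xs = n}"
    by (auto simp: lists_below_def H_def)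
qed (simp add: finite_lists_length_eq)

lemma traces_subset_Pow: "traces n S N \<subseteq> Pow (lists_below n N)"
  by (auto simp: traces_def trace_def)

lemma finite_traces: "finite (traces n S N)"
  using traces_subset_Pow finite_lists_below by (meson finite_Pow_iff finite_subset)

lemma Sinf_imp_inj: "g \<in> Sinf \<Longrightarrow> inj g"
  by (simp add: Sinf_def bij_is_inj)

lemma map_in_H: "inj g \<Longrightarrow> s \<in> H n \<Longrightarrow> map g s \<in> H n"
  by (auto simp: H_def distinct_map inj_on_def)

lemma trace_eq_act:
  assumes "g \<in> Sinf"
  shows "trace n S g N = {s \<in> lists_below n N. act n (chi n S) g s}"
  using map_in_H[OF Sinf_imp_inj[OF assms]] by (auto simp: trace_def lists_below_def act_def chi_def)

lemma trace_of_orbit_closure: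
  assumes "x \<in> cube n closure_of orbit n (chi n S)"
  obtains g where "g \<in> Sinf" "trace n S g N = {s \<in> lists_below n N. x s}"
proof -
  have "x \<in> topspace (cube n)" by (rule subsetD[OF closure_of_subset_topspace assms])
  then obtain a where a: "a \<in> orbit n (chi n S)" "\<forall>s\<in>lists_below n N. a s = x s"
    using assms finite_lists_below in_closure_of_cube_iff[OF _ orbit_subset_topspace] by metis
  then obtain g where "g \<in> Sinf" "a = act n (chi n S) g" by (auto simp: orbit_def)
  then show thesis using that a(2) trace_eq_act by auto
qed

lemma traces_subset_of_orbit_closure:
  assumes "orbit n (chi n S) \<subseteq> cube n closure_of orbit n (chi n S')"
  shows "traces n S N \<subseteq> traces n S' N"
proof
  fix c assume "c \<in> traces n S N"
  then obtain g where g: "g \<in> Sinf" "c = trace n S g N" by (auto simp: traces_def)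
  have "act n (chi n S) g \<in> cube n closure_of orbit n (chi n S')"
    using assms g(1) by (auto simp: orbit_def)
  then obtain g' where "g' \<in> Sinf" "trace n S' g' N = {s \<in> lists_below n N. act n (chi n S) g s}"
    by (rule trace_of_orbit_closure)
  then show "c \<in> traces n S' N" using g trace_eq_act by (auto simp: traces_def)
qed

lemma traces_dense_orbit:
  assumes "cube n closure_of orbit n (chi n S) = topspace (cube n)"
  shows "traces n S N = Pow (lists_below n N)"
proof
  show "Pow (lists_below n N) \<subseteq> traces n S N"
  proof
    fix A assume A: "A \<in> Pow (lists_below n N)"
    have "restrict (\<lambda>s. s \<in> A) (H n) \<in> cube n closure_of orbit n (chi n S)"
      using assms by (simp add: topspace_cube)
    then obtain g where "g \<in> Sinf" "trace n S g N = {s \<in> lists_below n N. restrict (\<lambda>s. s \<in> A) (H n) s}"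
      by (rule trace_of_orbit_closure)
    moreover have "{s \<in> lists_below n N. restrict (\<lambda>s. s \<in> A) (H n) s} = A"
      using A by (auto simp: lists_below_def)
    ultimately show "A \<in> traces n S N" by (auto simp: traces_def)
  qed
qed (rule traces_subset_Pow)

section \<open>Counting traces\<close>

text \<open>A translate of a pattern-defined set by \<open>g\<close> is seen on \<open>{..<N}\<close> only through
  \<open>rank_below g N\<close>, one of at most \<open>N^N\<close> maps \<open>{..<N} \<rightarrow> {..<N}\<close>.\<close>
lemma card_traces_order_pattern_set:
  "card (traces n {s \<in> H n. order_pattern s \<in> t} N) \<le> N ^ N"
proof -
  define \<Phi> where "\<Phi> r = {s \<in> lists_below n N. order_pattern (map r s) \<in> t}" for r
  define R where "R = PiE {..<N} (\<lambda>_. {..<N::nat})"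
  have "traces n {s \<in> H n. order_pattern s \<in> t} N \<subseteq> \<Phi> ` R"
  proof
    fix c assume "c \<in> traces n {s \<in> H n. order_pattern s \<in> t} N"
    then obtain g where g: "g \<in> Sinf" "c = trace n {s \<in> H n. order_pattern s \<in> t} g N"
      by (auto simp: traces_def)
    define r where "r = restrict (rank_below g N) {..<N}"
    have "r \<in> R" using rank_below_less by (auto simp: r_def R_def)
    moreover have "order_pattern (map g s) = order_pattern (map r s)" if "s \<in> lists_below n N" for s
    proof -
      have s: "set s \<subseteq> {..<N}" using that by (simp add: lists_below_def)
      then have "order_pattern (map g s) = order_pattern (map (rank_below g N) s)"
        by (rule order_pattern_map_rank_below)
      also have "map (rank_below g N) s = map r s" using s by (auto simp: r_def)
      finally show ?thesis .
    qed
    then have "c = \<Phi> r"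
      using g map_in_H[OF Sinf_imp_inj[OF g(1)]] by (auto simp: trace_def \<Phi>_def lists_below_def)
    ultimately show "c \<in> \<Phi> ` R" by blast
  qed
  then have "card (traces n {s \<in> H n. order_pattern s \<in> t} N) \<le> card (\<Phi> ` R)"
    by (rule card_mono[rotated]) (simp add: R_def finite_PiE)
  also have "\<dots> \<le> card R" by (rule card_image_le) (simp add: R_def finite_PiE)
  also have "\<dots> = N ^ N" by (simp add: R_def card_PiE)
  finally show ?thesis .
qed

lemma minimal_set_orbit_closure_order_pattern_set:
  assumes "minimal_set n S"
  obtains t where "orbit n (chi n S) \<subseteq> cube n closure_of orbit n (chi n {s \<in> H n. order_pattern s \<in> t})"
proof -
  from ramsey_order_pattern[of n S]
  obtain h t where h: "strict_mono h" "\<forall>s\<in>H n. map h s \<in> S \<longleftrightarrow> order_pattern s \<in> t"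
    by blast
  define S' where "S' = {s \<in> H n. order_pattern s \<in> t}"
  have inj_h: "inj h" using h(1) by (rule strict_mono_imp_inj_on)
  have "\<exists>a\<in>orbit n (chi n S). \<forall>s\<in>D. a s = chi n S' s" if D: "finite D" for D
  proof -
    obtain g where g: "bij g" "\<And>x. x \<in> \<Union>(set ` D) \<Longrightarrow> g x = h x"
      using extend_inj_on_to_bij[of h "\<Union>(set ` D)"] inj_h D by (auto intro: inj_on_subset)
    have "act n (chi n S) g s = chi n S' s" if "s \<in> D" for s
    proof (cases "s \<in> H n")
      case True
      have "act n (chi n S) g s = chi n S (map g s)" using True by (simp add: act_def)
      also have "map g s = map h s" using g(2) that by (auto intro: map_cong)
      also have "chi n S (map h s) = chi n S' s"
        using True h(2) map_in_H[OF inj_h True] by (simp add: chi_def S'_def)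
      finally show ?thesis .
    qed (simp add: act_def chi_def)
    moreover have "act n (chi n S) g \<in> orbit n (chi n S)" using g(1) by (simp add: orbit_def Sinf_def)
    ultimately show ?thesis by blast
  qed
  then have "chi n S' \<in> cube n closure_of orbit n (chi n S)"
    by (simp add: in_closure_of_cube_iff[OF chi_in_topspace orbit_subset_topspace])
  moreover have "\<forall>y \<in> cube n closure_of orbit n (chi n S).
      cube n closure_of orbit n y = cube n closure_of orbit n (chi n S)"
    using assms by (simp add: minimal_set_def)
  ultimately have "cube n closure_of orbit n (chi n S') = cube n closure_of orbit n (chi n S)"
    by blast
  then have "orbit n (chi n S) \<subseteq> cube n closure_of orbit n (chi n S')"
    using closure_of_subset[OF orbit_subset_topspace] by blast
  then show thesis unfolding S'_def by (rule that)
qed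

lemma card_traces_minimal_set:
  assumes "minimal_set n S"
  shows "card (traces n S N) \<le> N ^ N"
proof -
  obtain t where "orbit n (chi n S) \<subseteq> cube n closure_of orbit n (chi n {s \<in> H n. order_pattern s \<in> t})"
    using minimal_set_orbit_closure_order_pattern_set[OF assms] .
  then have "traces n S N \<subseteq> traces n {s \<in> H n. order_pattern s \<in> t} N"
    by (rule traces_subset_of_orbit_closure)
  then have "card (traces n S N) \<le> card (traces n {s \<in> H n. order_pattern s \<in> t} N)"
    by (simp add: card_mono finite_traces)
  also have "\<dots> \<le> N ^ N" by (rule card_traces_order_pattern_set)
  finally show ?thesis .
qed

lemma traces_empty: "traces n {} N = {{}}"
  by (auto simp: traces_def trace_def Sinf_def)

lemma traces_compl: "traces n (H n - S) N = (\<lambda>c. lists_below n N - c) ` traces n S N"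
proof -
  have "trace n (H n - S) g N = lists_below n N - trace n S g N" if "g \<in> Sinf" for g
    using map_in_H[OF Sinf_imp_inj[OF that]] by (auto simp: trace_def lists_below_def)
  then show ?thesis unfolding traces_def image_image by (rule image_cong[OF refl])
qed

lemma traces_Un_subset:
  "traces n (S \<union> T) N \<subseteq> (\<lambda>(c, d). c \<union> d) ` (traces n S N \<times> traces n T N)"
proof
  fix c assume "c \<in> traces n (S \<union> T) N"
  then obtain g where g: "g \<in> Sinf" "c = trace n (S \<union> T) g N" by (auto simp: traces_def)
  then have "c = (\<lambda>(c, d). c \<union> d) (trace n S g N, trace n T g N)" by (auto simp: trace_def)
  moreover have "(trace n S g N, trace n T g N) \<in> traces n S N \<times> traces n T N"
    using g(1) by (simp add: traces_def)
  ultimately show "c \<in> (\<lambda>(c, d). c \<union> d) ` (traces n S N \<times> traces n T N)" by blast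
qed

lemma card_traces_Un: "card (traces n (S \<union> T) N) \<le> card (traces n S N) * card (traces n T N)"
proof -
  have "card (traces n (S \<union> T) N) \<le> card ((\<lambda>(c, d). c \<union> d) ` (traces n S N \<times> traces n T N))"
    by (rule card_mono[OF _ traces_Un_subset]) (simp add: finite_traces)
  also have "\<dots> \<le> card (traces n S N \<times> traces n T N)"
    by (rule card_image_le) (simp add: finite_traces)
  finally show ?thesis by (simp add: card_cartesian_product)
qed

lemma card_traces_Balg:
  assumes "S \<in> Balg n"
  obtains k where "\<And>N. card (traces n S N) \<le> (N ^ N) ^ k"
proof -
  from assms have "\<exists>k. \<forall>N. card (traces n S N) \<le> (N ^ N) ^ k"
  proof (induction rule: Balg.induct)
    case (gen S)
    then show ?case using card_traces_minimal_set by (metis power_one_right)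
  next
    case empty
    show ?case by (intro exI[of _ 0]) (simp add: traces_empty)
  next
    case (compl S)
    then show ?case unfolding traces_compl using card_image_le[OF finite_traces] le_trans by meson
  next
    case (union S T)
    then obtain k l where k_l: "\<forall>N. card (traces n S N) \<le> (N ^ N) ^ k" "\<forall>N. card (traces n T N) \<le> (N ^ N) ^ l"
      by blast
    have "card (traces n (S \<union> T) N) \<le> (N ^ N) ^ (k + l)" for N
    proof -
      have "card (traces n (S \<union> T) N) \<le> card (traces n S N) * card (traces n T N)"
        by (rule card_traces_Un)
      also have "\<dots> \<le> (N ^ N) ^ k * (N ^ N) ^ l" using k_l by (intro mult_le_mono) auto
      finally show ?thesis by (simp add: power_add)
    qed
    then show ?case by blast
  qed
  then show thesis using that by blast
qed

lemma card_traces_incl: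
  assumes "m \<le> n"
  shows "card (traces m T N) \<le> card (traces n (incl n m T) (N + (n - m)))"
proof -
  define pad where "pad = [N..<N + (n - m)]"
  define \<psi> where "\<psi> B = {s \<in> lists_below m N. s @ pad \<in> B}" for B
  have padded: "s @ pad \<in> lists_below n (N + (n - m))" if "s \<in> lists_below m N" for s
    using that assms by (auto simp: lists_below_def H_def pad_def)
  have "trace m T g N = \<psi> (trace n (incl n m T) g (N + (n - m)))" if g: "g \<in> Sinf" for g
  proof -
    have "map g (s @ pad) \<in> incl n m T \<longleftrightarrow> map g s \<in> T" if s: "s \<in> lists_below m N" for s
    proof -
      have "s @ pad \<in> H n" using padded[OF s] by (simp add: lists_below_def)
      then have "map g (s @ pad) \<in> H n" by (rule map_in_H[OF Sinf_imp_inj[OF g]])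
      moreover have "take m (map g (s @ pad)) = map g s" using s by (simp add: lists_below_def H_def)
      ultimately show ?thesis by (simp add: incl_def)
    qed
    then show ?thesis using padded by (auto simp: trace_def \<psi>_def)
  qed
  then have "traces m T N \<subseteq> \<psi> ` traces n (incl n m T) (N + (n - m))"
    by (auto simp: traces_def)
  then have "card (traces m T N) \<le> card (\<psi> ` traces n (incl n m T) (N + (n - m)))"
    by (rule card_mono[rotated]) (simp add: finite_traces)
  also have "\<dots> \<le> card (traces n (incl n m T) (N + (n - m)))"
    by (rule card_image_le[OF finite_traces])
  finally show ?thesis .
qed

lemma card_lists_below_ge:
  assumes "m \<ge> 2"
  shows "N * N - N \<le> card (lists_below m (N + (m - 2)))"
proof -
  define P where "P = {..<N} \<times> {..<N} - (\<lambda>a. (a, a)) ` {..<N}"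
  define \<phi> where "\<phi> p = [fst p, snd p] @ [N..<N + (m - 2)]" for p :: "nat \<times> nat"
  have "card ((\<lambda>a. (a, a)) ` {..<N}) = N" by (simp add: card_image inj_on_def)
  then have "N * N - N = card P" unfolding P_def by (subst card_Diff_subset) auto
  also have "\<dots> = card (\<phi> ` P)"
    by (rule card_image[symmetric]) (auto simp: inj_on_def \<phi>_def prod_eq_iff)
  also have "\<dots> \<le> card (lists_below m (N + (m - 2)))"
    by (rule card_mono[OF finite_lists_below]) (use assms in \<open>auto simp: P_def \<phi>_def lists_below_def H_def\<close>)
  finally show ?thesis .
qed

lemma square_le_two_pow: "4 \<le> L \<Longrightarrow> L * L \<le> (2::nat) ^ L"
proof (induction L rule: dec_induct)
  case (step L)
  have "Suc L * Suc L = L * L + 2 * L + 1" by simp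
  also have "\<dots> \<le> L * L + L * L" using step(1) mult_le_mono1[OF step(1), of L] by linarith
  also have "\<dots> \<le> 2 ^ Suc L" using step(3) by simp
  finally show ?case .
qed simp

lemma ex_pow_pow_less_two_pow: "\<exists>N. ((N + c) ^ (N + c)) ^ k < (2::nat) ^ (N * N - N)"
proof -
  define L where "L = 2 * k + 2 * k + 1 + c + 5"
  have "2 * k * L + (2 * k + 1 + c) < L * L" by (simp add: L_def algebra_simps)
  also have "\<dots> \<le> 2 ^ L" by (rule square_le_two_pow) (simp add: L_def)
  finally have L: "2 * k * L + (2 * k + 1 + c) < (2::nat) ^ L" .
  define N where "N = (2::nat) ^ L"
  have c_le: "c \<le> N" and k_less: "2 * (L + 1) * k < N - 1" using L by (simp_all add: N_def algebra_simps)
  have "((N + c) ^ (N + c)) ^ k = (N + c) ^ ((N + c) * k)" by (simp add: power_mult)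
  also have "\<dots> \<le> ((2::nat) ^ (L + 1)) ^ ((N + c) * k)"
    by (rule power_mono) (use c_le in \<open>simp_all add: N_def\<close>)
  also have "\<dots> = 2 ^ ((L + 1) * (N + c) * k)" by (simp only: power_mult[symmetric] mult.assoc)
  also have "\<dots> < 2 ^ (N * N - N)"
  proof (rule power_strict_increasing)
    have "(L + 1) * (N + c) * k \<le> (L + 1) * (2 * N) * k" using c_le by (intro mult_le_mono) auto
    also have "\<dots> = N * (2 * (L + 1) * k)" by (simp add: algebra_simps)
    also have "\<dots> < N * (N - 1)" using k_less by (simp add: N_def)
    finally show "(L + 1) * (N + c) * k < N * N - N" by (simp add: algebra_simps)
  qed simp
  finally show ?thesis by blast
qed

lemma Bprime_omits_trace:
  assumes "m \<ge> 2" "T \<in> Bprime m"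
  obtains N A where "A \<subseteq> lists_below m N" "A \<notin> traces m T N"
proof (rule ccontr)
  assume all: "\<not> thesis"
  obtain n where n: "m \<le> n" "incl n m T \<in> Balg n" using assms(2) by (auto simp: Bprime_def)
  obtain k where k: "\<And>N. card (traces n (incl n m T) N) \<le> (N ^ N) ^ k"
    using card_traces_Balg[OF n(2)] by blast
  obtain N where N: "((N + (n - 2)) ^ (N + (n - 2))) ^ k < (2::nat) ^ (N * N - N)"
    using ex_pow_pow_less_two_pow by blast
  define M where "M = N + (m - 2)"
  have "Pow (lists_below m M) \<subseteq> traces m T M" using all that by blast
  then have "(2::nat) ^ card (lists_below m M) \<le> card (traces m T M)"
    by (metis card_Pow card_mono finite_lists_below finite_traces)
  moreover have "(2::nat) ^ (N * N - N) \<le> 2 ^ card (lists_below m M)"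
    using card_lists_below_ge[OF assms(1)] by (simp add: M_def)
  moreover have "card (traces m T M) \<le> card (traces n (incl n m T) (N + (n - 2)))"
    using card_traces_incl[OF n(1), of T M] assms(1) n(1) by (simp add: M_def)
  ultimately show False using k[of "N + (n - 2)"] N by linarith
qed

section \<open>Points omitting a trace\<close>

definition omitting_trace :: "nat \<Rightarrow> nat \<Rightarrow> nat list set \<Rightarrow> (nat list \<Rightarrow> bool) set" where
  "omitting_trace m N A =
     {x \<in> topspace (cube m). \<forall>g\<in>Sinf. {s \<in> lists_below m N. x (map g s)} \<noteq> A}"

lemma chi_in_omitting_trace_iff: "chi m T \<in> omitting_trace m N A \<longleftrightarrow> A \<notin> traces m T N"
proof -
  have "{s \<in> lists_below m N. chi m T (map g s)} = trace m T g N" if "g \<in> Sinf" for g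
    using map_in_H[OF Sinf_imp_inj[OF that]] by (auto simp: lists_below_def trace_def chi_def)
  then show ?thesis by (auto simp: omitting_trace_def traces_def chi_in_topspace)
qed

text \<open>Inside any basic open set, translate \<open>{..<N}\<close> away from the finitely many coordinates
  it fixes and prescribe the trace \<open>A\<close> there.\<close>
lemma nowhere_dense_omitting_trace:
  assumes "m \<ge> 1" "A \<subseteq> lists_below m N"
  shows "nowhere_dense_in (cube m) (omitting_trace m N A)"
proof (rule nowhere_dense_inI)
  show "omitting_trace m N A \<subseteq> topspace (cube m)" by (auto simp: omitting_trace_def)
next
  fix U assume U: "openin (cube m) U" "U \<noteq> {}"
  then obtain y where y: "y \<in> U" by blast
  then have y_top: "y \<in> topspace (cube m)" using U(1) openin_subset by blast
  obtain D where D: "finite D" "cylinder m y D \<subseteq> U"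
    using openin_cube_contains_cylinder[OF U(1) y] by blast
  obtain b where b: "\<Union>(set ` D) \<subseteq> {..<b}" using finite_nat_bounded[of "\<Union>(set ` D)"] D(1) by blast
  obtain g where g: "bij g" "\<And>i. i \<in> {..<N} \<Longrightarrow> g i = b + i"
    using extend_inj_on_to_bij[of "(+) b" "{..<N}"] by auto
  have g_Sinf: "g \<in> Sinf" using g(1) by (simp add: Sinf_def)
  have moved: "map g s \<notin> D" "map (inv g) (map g s) = s" if s: "s \<in> lists_below m N" for s
  proof -
    have "s \<noteq> []" using s assms(1) by (auto simp: lists_below_def H_def)
    have "g (hd s) \<ge> b" using s g(2) hd_in_set[OF \<open>s \<noteq> []\<close>] by (auto simp: lists_below_def)
    show "map g s \<notin> D"
    proof
      assume "map g s \<in> D"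
      moreover have "g (hd s) \<in> set (map g s)" using \<open>s \<noteq> []\<close> by simp
      ultimately have "g (hd s) \<in> {..<b}" using b by blast
      then show False using \<open>g (hd s) \<ge> b\<close> by simp
    qed
    show "map (inv g) (map g s) = s" using bij_is_inj[OF g(1)] by (simp add: map_idI)
  qed
  define x where "x = restrict (\<lambda>s. if s \<in> D then y s else map (inv g) s \<in> A) (H m)"
  have x_top: "x \<in> topspace (cube m)" by (simp add: x_def topspace_cube)
  define V where "V = cylinder m x (D \<union> map g ` lists_below m N)"
  have "openin (cube m) V"
    unfolding V_def by (rule openin_cylinder[OF _ x_top]) (simp add: D(1) finite_lists_below)
  moreover have "V \<noteq> {}" using x_top by (auto simp: V_def cylinder_def)
  moreover have "V \<subseteq> U"
  proof -
    have "x s = y s" if "s \<in> D" for s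
      using that cube_points_eq_outside_H[OF x_top y_top] by (cases "s \<in> H m") (auto simp: x_def)
    then have "V \<subseteq> cylinder m y D" by (auto simp: V_def cylinder_def)
    then show ?thesis using D(2) by blast
  qed
  moreover have "V \<inter> omitting_trace m N A = {}"
  proof -
    have "z (map g s) \<longleftrightarrow> s \<in> A" if "z \<in> V" "s \<in> lists_below m N" for z s
    proof -
      have "map g s \<in> H m" using that(2) map_in_H[OF bij_is_inj[OF g(1)]] by (simp add: lists_below_def)
      then show ?thesis using that moved[OF that(2)] by (simp add: V_def cylinder_def x_def)
    qed
    then have "{s \<in> lists_below m N. z (map g s)} = A" if "z \<in> V" for z
      using that assms(2) by auto
    then show ?thesis using g_Sinf by (auto simp: omitting_trace_def)
  qed
  ultimately show "\<exists>V. openin (cube m) V \<and> V \<noteq> {} \<and> V \<subseteq> U \<and> V \<inter> omitting_trace m N A = {}"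
    by blast
qed

theorem mainTheorem6:
  fixes m :: nat
  assumes "m \<ge> 2"
  shows "meager_in (cube m) (chi m ` Bprime m) \<and>
         (\<forall>T. T \<subseteq> H m \<and> cube m closure_of orbit m (chi m T) = topspace (cube m)
              \<longrightarrow> T \<notin> Bprime m)"
proof
  \<comment> \<open>Finite sets of lists are indexed by lists to get a countable index type; the intersection
    keeps every member of the cover nowhere dense.\<close>
  let ?F = "\<lambda>(N, As :: nat list list). omitting_trace m N (set As \<inter> lists_below m N)"
  show "meager_in (cube m) (chi m ` Bprime m)"
  proof (rule meager_inI_countable_cover)
    show "nowhere_dense_in (cube m) (?F i)" for i
      using assms by (cases i) (simp add: nowhere_dense_omitting_trace)
    show "chi m ` Bprime m \<subseteq> (\<Union>i. ?F i)"
    proof (rule image_subsetI)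
      fix T assume "T \<in> Bprime m"
      obtain N A where A: "A \<subseteq> lists_below m N" "A \<notin> traces m T N"
        using Bprime_omits_trace[OF assms \<open>T \<in> Bprime m\<close>] .
      obtain As where "set As = A" using finite_list finite_subset[OF A(1) finite_lists_below] by blast
      then have "chi m T \<in> ?F (N, As)" using A chi_in_omitting_trace_iff by (simp add: Int_absorb2)
      then show "chi m T \<in> (\<Union>i. ?F i)" by blast
    qed
  qed
  show "\<forall>T. T \<subseteq> H m \<and> cube m closure_of orbit m (chi m T) = topspace (cube m) \<longrightarrow> T \<notin> Bprime m"
  proof (intro allI impI notI)
    fix T assume T: "T \<subseteq> H m \<and> cube m closure_of orbit m (chi m T) = topspace (cube m)"
      and "T \<in> Bprime m"
    obtain N A where "A \<subseteq> lists_below m N" "A \<notin> traces m T N"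
      using Bprime_omits_trace[OF assms \<open>T \<in> Bprime m\<close>] .
    then show False using traces_dense_orbit[of m T N] T by blast
  qed
qed

end
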